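(* Let $U\subset\mathbb{C}\setminus\{0\}$ be a (connected) domain on which an analytic branch of $\ln x$ is fixed, and let $f$ be a nowhere-vanishing complex-differentiable function on $U$. Then $\mathcal{A}[f]=f$ on $U$ if and only if there is a constant $a\in\mathbb{C}$ with $a-\ln x\neq 0$ on $U$ such that \[ f(x)=\frac{1}{a-\ln x}\qquad (x\in U). \]
   Context: For a complex-differentiable, nowhere-vanishing function $f$ on a domain $U\subset\mathbb{C}\setminus\{0\}$, the dual logarithmic derivative operator is $\mathcal{A}[f](x)=\dfrac{\mathrm{d}\ln f(x)}{\mathrm{d}\ln x}=\dfrac{x f'(x)}{f(x)}$ (for fixed analytic branches of the logarithms). A function $f$ with $\mathcal{A}[f]=f$ is called a fixed point of $\mathcal{A}$. *)

theory Defs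
  imports "HOL-Complex_Analysis.Complex_Analysis"
begin

text \<open>Dual logarithmic derivative: d ln f(x) / d ln x = x f'(x) / f(x).\<close>
definition dual_log_deriv :: "(complex \<Rightarrow> complex) \<Rightarrow> complex \<Rightarrow> complex" where
  "dual_log_deriv f x = x * deriv f x / f x"

definition log_branch_on :: "(complex \<Rightarrow> complex) \<Rightarrow> complex set \<Rightarrow> bool" where
  "log_branch_on L U \<longleftrightarrow> L holomorphic_on U \<and> (\<forall>x\<in>U. exp (L x) = x)"

end

theory Submission
  imports Defs
begin

text \<open>Since the branch L has derivative 1/x, the function 1/f + L has derivative
  (f - A[f]) / (x f). So A[f] = f on the connected domain U exactly when 1/f + L is a
  constant a there, i.e. when f = 1/(a - L).\<close>

lemma log_branch_on_nonzero:
  assumes "log_branch_on L U" "z \<in> U"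
  shows "z \<noteq> 0"
  using assms unfolding log_branch_on_def by (metis exp_not_eq_zero)

lemma has_field_derivative_log_branch:
  assumes "log_branch_on L U" "open U" "z \<in> U"
  shows "(L has_field_derivative 1 / z) (at z)"
  using assms has_field_derivative_complex_logarithm unfolding log_branch_on_def by blast

lemma has_field_derivative_inverse_add_log_branch:
  assumes "log_branch_on L U" "open U" "f holomorphic_on U" "z \<in> U" "f z \<noteq> 0"
  shows "((\<lambda>w. 1 / f w + L w) has_field_derivative
           (f z - dual_log_deriv f z) / (z * f z)) (at z)"
proof -
  have "z \<noteq> 0"
    using assms(1,4) by (rule log_branch_on_nonzero)
  have "(f has_field_derivative deriv f z) (at z)"
    using assms(2-4) holomorphic_derivI by blast
  from DERIV_add[OF DERIV_inverse_fun[OF this \<open>f z \<noteq> 0\<close>]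
                    has_field_derivative_log_branch[OF assms(1,2,4)]]
  have "((\<lambda>w. inverse (f w) + L w) has_field_derivative
          - (deriv f z * inverse (f z ^ 2)) + 1 / z) (at z)"
    by (simp add: numeral_2_eq_2)
  moreover have "- (deriv f z * inverse (f z ^ 2)) + 1 / z = (f z - dual_log_deriv f z) / (z * f z)"
    using \<open>z \<noteq> 0\<close> \<open>f z \<noteq> 0\<close>
    by (simp add: dual_log_deriv_def field_simps power2_eq_square)
  ultimately show ?thesis
    by (simp add: inverse_eq_divide)
qed

lemma constant_on_iff_has_field_derivative_0:
  fixes g g' :: "complex \<Rightarrow> complex"
  assumes "open U" "connected U" "\<And>z. z \<in> U \<Longrightarrow> (g has_field_derivative g' z) (at z)"
  shows "g constant_on U \<longleftrightarrow> (\<forall>z\<in>U. g' z = 0)"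
proof
  assume "g constant_on U"
  then obtain a where a: "\<And>z. z \<in> U \<Longrightarrow> g z = a"
    unfolding constant_on_def by blast
  show "\<forall>z\<in>U. g' z = 0"
  proof
    fix z assume "z \<in> U"
    have "(g has_field_derivative 0) (at z)"
      by (rule has_field_derivative_transform_within_open[OF DERIV_const \<open>open U\<close> \<open>z \<in> U\<close>])
         (simp add: a)
    then show "g' z = 0"
      using assms(3)[OF \<open>z \<in> U\<close>] DERIV_unique by blast
  qed
next
  assume "\<forall>z\<in>U. g' z = 0"
  then show "g constant_on U"
    using assms by (intro has_field_derivative_0_imp_constant_on) auto
qed

lemma dual_log_deriv_fixed_iff_constant_on:
  assumes "open U" "connected U" "log_branch_on L U"
    and "f holomorphic_on U" "\<forall>x\<in>U. f x \<noteq> 0"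
  shows "(\<forall>x\<in>U. dual_log_deriv f x = f x) \<longleftrightarrow> (\<lambda>w. 1 / f w + L w) constant_on U"
proof -
  have "(f z - dual_log_deriv f z) / (z * f z) = 0 \<longleftrightarrow> dual_log_deriv f z = f z"
    if "z \<in> U" for z
    using assms(5) that log_branch_on_nonzero[OF assms(3)] by auto
  then show ?thesis
    using constant_on_iff_has_field_derivative_0[OF assms(1,2)
            has_field_derivative_inverse_add_log_branch[OF assms(3,1,4)]] assms(5)
    by auto
qed

lemma inverse_add_constant_on_iff:
  fixes f L :: "complex \<Rightarrow> complex"
  assumes "\<forall>x\<in>U. f x \<noteq> 0"
  shows "(\<lambda>w. 1 / f w + L w) constant_on U \<longleftrightarrow>
         (\<exists>a. (\<forall>x\<in>U. a - L x \<noteq> 0) \<and> (\<forall>x\<in>U. f x = 1 / (a - L x)))"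
proof
  assume "(\<lambda>w. 1 / f w + L w) constant_on U"
  then obtain a where a: "\<And>x. x \<in> U \<Longrightarrow> 1 / f x + L x = a"
    unfolding constant_on_def by blast
  then have "\<And>x. x \<in> U \<Longrightarrow> a - L x = 1 / f x"
    by fastforce
  then show "\<exists>a. (\<forall>x\<in>U. a - L x \<noteq> 0) \<and> (\<forall>x\<in>U. f x = 1 / (a - L x))"
    using assms by (intro exI[of _ a]) auto
next
  assume "\<exists>a. (\<forall>x\<in>U. a - L x \<noteq> 0) \<and> (\<forall>x\<in>U. f x = 1 / (a - L x))"
  then show "(\<lambda>w. 1 / f w + L w) constant_on U"
    unfolding constant_on_def by auto
qed

theorem theorem5p3:
  fixes U :: "complex set" and f L :: "complex \<Rightarrow> complex"
  assumes "open U" and "connected U" and "U \<noteq> {}" and "0 \<notin> U"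
    and "log_branch_on L U"
    and "f holomorphic_on U" and "\<forall>x\<in>U. f x \<noteq> 0"
  shows "(\<forall>x\<in>U. dual_log_deriv f x = f x) \<longleftrightarrow>
         (\<exists>a::complex. (\<forall>x\<in>U. a - L x \<noteq> 0) \<and> (\<forall>x\<in>U. f x = 1 / (a - L x)))"
  using dual_log_deriv_fixed_iff_constant_on[OF assms(1,2,5-7)]
        inverse_add_constant_on_iff[OF assms(7)]
  by simp

end
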